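(* Let $f_{\mathrm B}$ be a Bad Teacher. For any unlearnable sample $i\in\mathcal S_U$ and any value $f_{\mathbf W}\in\mathbb R$ of the student logit, the derivatives of the per-sample adversarial distillation loss and adversarial training loss with respect to the student logit satisfy $\left|\dfrac{\partial\mathcal L_{\mathrm{AD}}}{\partial f_{\mathbf W}}-\dfrac{\partial\mathcal L_{\mathrm{AT}}}{\partial f_{\mathbf W}}\right|\le e^{-Cd}$.
   Context: $\ell(z)=\log(1+e^{-z})$, $\sigma(z)=(1+e^{-z})^{-1}$. Labeled training samples $(\mathbf X_i,y_i)$, $y_i\in\{\pm1\}$, indices partitioned $[N]=\mathcal S_L\sqcup\mathcal S_U$. As functions of the student's logit $f_{\mathbf W}$ (the student output on the adversarial input of sample $i$), $\mathcal L_{\mathrm{AT}}=\ell(y_if_{\mathbf W})$ and $\mathcal L_{\mathrm{AD}}=\sigma(y_if_{\mathrm T}(\mathbf X_i))\ell(y_if_{\mathbf W})+\sigma(-y_if_{\mathrm T}(\mathbf X_i))\ell(-y_if_{\mathbf W})$ for a fixed teacher $f_{\mathrm T}$. A Bad Teacher $f_{\mathrm B}$ satisfies $y_if_{\mathrm B}(\mathbf X_i)\ge\Gamma$ for all $i\in[N]$ (both learnable and unlearnable samples). Standing assumption: $\Gamma\ge Cd$, where $d$ is the data dimension and $C>0$ is a (sufficiently large) universal constant. *)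

theory Defs
  imports "HOL-Analysis.Analysis"
begin

definition logloss :: "real \<Rightarrow> real" where
  "logloss z = ln (1 + exp (- z))"

definition sigmoid :: "real \<Rightarrow> real" where
  "sigmoid z = 1 / (1 + exp (- z))"

definition L_AT :: "real \<Rightarrow> real \<Rightarrow> real" where
  "L_AT y z = logloss (y * z)"

text \<open>Per-sample adversarial distillation loss; t is the teacher logit on the clean input.\<close>
definition L_AD :: "real \<Rightarrow> real \<Rightarrow> real \<Rightarrow> real" where
  "L_AD t y z = sigmoid (y * t) * logloss (y * z) + sigmoid (- y * t) * logloss (- y * z)"

definition bad_teacher :: "(nat \<Rightarrow> 'x) \<Rightarrow> (nat \<Rightarrow> real) \<Rightarrow> nat \<Rightarrow> real \<Rightarrow> ('x \<Rightarrow> real) \<Rightarrow> bool" where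
  "bad_teacher X y N \<Gamma> fB \<longleftrightarrow> (\<forall>i\<in>{1..N}. y i * fB (X i) \<ge> \<Gamma>)"

end

theory Submission
  imports Defs
begin

text \<open>Since \<open>\<ell>' = -\<sigma>(-\<cdot>)\<close> and \<open>\<sigma>(z) + \<sigma>(-z) = 1\<close>, the two loss derivatives differ by exactly
  \<open>y \<sigma>(-y f\<^sub>T)\<close>, independently of the student logit. For a label \<open>y = \<plusminus>1\<close> and a teacher margin
  \<open>y f\<^sub>T \<ge> \<Gamma>\<close> this is at most \<open>\<sigma>(-\<Gamma>) \<le> e\<^sup>-\<^sup>\<Gamma> \<le> e\<^sup>-\<^sup>C\<^sup>d\<close>.\<close>

lemma sigmoid_pos: "sigmoid z > 0"
  unfolding sigmoid_def by (simp add: add_pos_pos)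

lemma sigmoid_minus: "sigmoid (- z) = 1 - sigmoid z"
proof -
  have "1 + exp z > 0" by (simp add: add_pos_pos)
  then show ?thesis unfolding sigmoid_def by (simp add: exp_minus field_simps)
qed

lemma sigmoid_minus_le_exp_minus: "sigmoid (- z) \<le> exp (- z)"
  unfolding sigmoid_def exp_minus inverse_eq_divide by (rule frac_le) auto

lemma has_real_derivative_logloss: "(logloss has_real_derivative - sigmoid (- z)) (at z)"
proof -
  have "1 + exp (- z) > 0" by (simp add: add_pos_pos)
  then have "((\<lambda>z. ln (1 + exp (- z))) has_real_derivative
      exp (- z) * - 1 / (1 + exp (- z))) (at z)"
    by (auto intro!: derivative_eq_intros)
  moreover have "exp (- z) * - 1 / (1 + exp (- z)) = - sigmoid (- z)"
    using \<open>1 + exp (- z) > 0\<close> unfolding sigmoid_minus by (simp add: sigmoid_def field_simps)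
  ultimately show ?thesis unfolding logloss_def[abs_def] by simp
qed

lemma has_real_derivative_logloss_scaled:
  "((\<lambda>z. logloss (c * z)) has_real_derivative - c * sigmoid (- (c * z))) (at z)"
proof -
  have "((logloss \<circ> (\<lambda>z. c * z)) has_real_derivative - sigmoid (- (c * z)) * c) (at z)"
    by (rule DERIV_chain[OF has_real_derivative_logloss DERIV_cmult_Id])
  then show ?thesis by (simp add: o_def mult.commute)
qed

lemma deriv_L_AT: "deriv (L_AT y) w = - y * sigmoid (- (y * w))"
  unfolding L_AT_def[abs_def] by (rule DERIV_imp_deriv[OF has_real_derivative_logloss_scaled])

lemma deriv_L_AD:
  "deriv (L_AD t y) w = y * (sigmoid (- y * t) * sigmoid (y * w) - sigmoid (y * t) * sigmoid (- (y * w)))"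
proof -
  have "(L_AD t y has_real_derivative
      sigmoid (y * t) * (- y * sigmoid (- (y * w))) + sigmoid (- y * t) * (y * sigmoid (y * w))) (at w)"
    unfolding L_AD_def[abs_def]
    using has_real_derivative_logloss_scaled[of y w] has_real_derivative_logloss_scaled[of "- y" w]
    by (auto intro!: derivative_eq_intros)
  then show ?thesis by (rule DERIV_imp_deriv[THEN trans]) (simp add: algebra_simps)
qed

lemma deriv_L_AD_minus_deriv_L_AT:
  "deriv (L_AD t y) w - deriv (L_AT y) w = y * sigmoid (- (y * t))"
proof -
  have "deriv (L_AD t y) w - deriv (L_AT y) w
      = y * (sigmoid (- (y * t)) * sigmoid (y * w) + (1 - sigmoid (y * t)) * sigmoid (- (y * w)))"
    unfolding deriv_L_AD deriv_L_AT by (simp add: algebra_simps)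
  also have "\<dots> = y * sigmoid (- (y * t)) * (sigmoid (y * w) + sigmoid (- (y * w)))"
    by (simp only: sigmoid_minus[of "y * t"]) (simp add: algebra_simps)
  finally show ?thesis by (simp add: sigmoid_minus[of "y * w"])
qed

theorem lemmaH2:
  fixes X :: "nat \<Rightarrow> real ^ 'd" and y :: "nat \<Rightarrow> real" and N :: nat
    and SL SU :: "nat set" and \<Gamma> C :: real and fB :: "real ^ 'd \<Rightarrow> real"
    and i :: nat and w :: real
  assumes labels: "\<forall>j\<in>{1..N}. y j \<in> {-1, 1}"
    and part: "SL \<union> SU = {1..N}" "SL \<inter> SU = {}"
    and C_pos: "C > 0"
    and Gamma_ge: "\<Gamma> \<ge> C * real CARD('d)"
    and bad: "bad_teacher X y N \<Gamma> fB"
    and unl: "i \<in> SU"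
  shows "\<bar>deriv (L_AD (fB (X i)) (y i)) w - deriv (L_AT (y i)) w\<bar>
           \<le> exp (- C * real CARD('d))"
proof -
  have i: "i \<in> {1..N}" using part unl by blast
  then have "y i \<in> {-1, 1}" using labels by blast
  then have "\<bar>y i\<bar> = 1" by auto
  moreover have margin: "y i * fB (X i) \<ge> \<Gamma>" using bad i unfolding bad_teacher_def by blast
  ultimately have "\<bar>deriv (L_AD (fB (X i)) (y i)) w - deriv (L_AT (y i)) w\<bar>
      = sigmoid (- (y i * fB (X i)))"
    by (simp add: deriv_L_AD_minus_deriv_L_AT abs_mult less_imp_le[OF sigmoid_pos])
  also have "\<dots> \<le> exp (- (y i * fB (X i)))" by (rule sigmoid_minus_le_exp_minus)
  also have "\<dots> \<le> exp (- C * real CARD('d))" using margin Gamma_ge by simp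
  finally show ?thesis .
qed

end
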